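(* There exist a countable submetrizable ($T_1$, regular) space $X$ and a continuous surjective map $f\colon X\to S_\omega$ which is compact and sequence-covering but not 1-sequence-covering.
   Context: $\omega$ denotes the set of natural numbers. The sequential fan $S_\omega$ is the set $\{0\}\cup\omega^2$ (where $0$ is a point not in $\omega^2$) with the topology generated by the base consisting of all singletons $\{x\}$ with $x\in\omega^2$ together with all sets $\{0\}\cup\{\langle n,k\rangle : n\in\omega,\ k\ge g(n)\}$ for $g\colon\omega\to\omega$. A space $\langle X,\tau_X\rangle$ is submetrizable if there is a metrizable topology $\sigma\subseteq\tau_X$ on $X$. A map is compact if all its fibers are compact. For a space $Z$ and $z\in Z$, $\mathsf{ConvSeq}(Z,z)$ is the set of non-trivial (not eventually constant) sequences in $Z$ converging to $z$, and $\mathsf{ConvSeq}(Z)=\bigcup_{z}\mathsf{ConvSeq}(Z,z)$. A sequence $q$ in $X$ covers a sequence $p$ in $Y$ (with respect to $f\colon X\to Y$) if $f(q(n))=p(n)$ for all $n$. $f$ is sequence-covering if every $p\in\mathsf{ConvSeq}(Y)$ is covered by some $q\in\mathsf{ConvSeq}(X)$; $f$ is 1-sequence-covering if for every $y\in Y$ there is $x\in f^{-1}(y)$ such that every $p\in\mathsf{ConvSeq}(Y,y)$ is covered by some $q\in\mathsf{ConvSeq}(X,x)$. *)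

theory Defs
  imports "HOL-Analysis.Analysis"
begin

text \<open>The sequential fan. The point 0 is represented by None, the point (n,k) of
  omega^2 by Some (n,k).\<close>

definition Sfan_base :: "(nat \<times> nat) option set set" where
  "Sfan_base = {{Some p} | p. True} \<union>
     {insert None {Some (n, k) | n k. k \<ge> g n} | g :: nat \<Rightarrow> nat. True}"

definition S_omega :: "(nat \<times> nat) option topology" where
  "S_omega = topology_generated_by Sfan_base"

definition submetrizable :: "'a topology \<Rightarrow> bool" where
  "submetrizable X \<longleftrightarrow> (\<exists>\<sigma>. metrizable_space \<sigma> \<and> topspace \<sigma> = topspace X \<and>
       (\<forall>U. openin \<sigma> U \<longrightarrow> openin X U))"

definition compact_map :: "'a topology \<Rightarrow> 'b topology \<Rightarrow> ('a \<Rightarrow> 'b) \<Rightarrow> bool" where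
  "compact_map X Y f \<longleftrightarrow> (\<forall>y \<in> topspace Y. compactin X {x \<in> topspace X. f x = y})"

definition ConvSeq :: "'a topology \<Rightarrow> 'a \<Rightarrow> (nat \<Rightarrow> 'a) set" where
  "ConvSeq Z z = {q. (\<forall>n. q n \<in> topspace Z) \<and> limitin Z q z sequentially \<and>
       \<not> (\<exists>c. eventually (\<lambda>n. q n = c) sequentially)}"

definition covers :: "('a \<Rightarrow> 'b) \<Rightarrow> (nat \<Rightarrow> 'a) \<Rightarrow> (nat \<Rightarrow> 'b) \<Rightarrow> bool" where
  "covers f q p \<longleftrightarrow> (\<forall>n. f (q n) = p n)"

definition sequence_covering :: "'a topology \<Rightarrow> 'b topology \<Rightarrow> ('a \<Rightarrow> 'b) \<Rightarrow> bool" where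
  "sequence_covering X Y f \<longleftrightarrow>
     (\<forall>y p. p \<in> ConvSeq Y y \<longrightarrow> (\<exists>x q. q \<in> ConvSeq X x \<and> covers f q p))"

definition one_sequence_covering :: "'a topology \<Rightarrow> 'b topology \<Rightarrow> ('a \<Rightarrow> 'b) \<Rightarrow> bool" where
  "one_sequence_covering X Y f \<longleftrightarrow>
     (\<forall>y \<in> topspace Y. \<exists>x \<in> topspace X. f x = y \<and>
        (\<forall>p \<in> ConvSeq Y y. \<exists>q \<in> ConvSeq X x. covers f q p))"

end

(* The space has a point Infty, points Apex m converging to Infty, and, hanging at each Apex m
   and converging to it, a copy of the part n <= m <= k of the first m + 1 columns of the fan;
   isolated copies of all points (n, k) make the map onto S_omega surjective.  The map sends Infty
   and the apexes to the vertex and every copy of (n, k) to (n, k), so its fibres are finite or a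
   convergent sequence with its limit.
   A non-trivial sequence converging in S_omega converges to the vertex and meets only finitely
   many columns, say those up to N, so it lifts to a sequence converging to Apex N.  But no point
   over the vertex lifts every such sequence: Apex m misses column m + 1, and a lift of column 0
   converging to Infty can keep only finitely many terms in each level m (some neighbourhood of
   Infty avoids the levels up to m), and then its range is closed and misses Infty.
   A continuous injection into the plane gives submetrizability, the apex neighbourhoods are
   clopen, so the space is zero-dimensional and hence regular, and being countable it is
   homeomorphic to a topology on nat. *)

theory Submission
  imports Defs "HOL-Library.Nat_Bijection"
begin

section \<open>Homeomorphic copies and continuous injections\<close>

lemma homeomorphic_map_pullback_topology:
  assumes f: "bij_betw f A (topspace T)"
  shows "homeomorphic_map (pullback_topology A f T) T f"
proof (rule bijective_open_imp_homeomorphic_map)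
  have top: "topspace (pullback_topology A f T) = A"
    using f by (auto simp: topspace_pullback_topology bij_betw_def)
  show "continuous_map (pullback_topology A f T) T f"
    using continuous_map_pullback[OF continuous_map_id, of A f T] by simp
  show "open_map (pullback_topology A f T) T f"
    unfolding open_map_def openin_pullback_topology
  proof clarify
    fix U assume U: "openin T U"
    have "U \<subseteq> f ` A"
      using f openin_subset[OF U] by (simp add: bij_betw_def)
    then have "f ` (f -` U \<inter> A) = U" by auto
    then show "openin T (f ` (f -` U \<inter> A))" using U by simp
  qed
  show "f ` topspace (pullback_topology A f T) = topspace T"
       "inj_on f (topspace (pullback_topology A f T))"
    using f by (simp_all add: top bij_betw_def)
qed

lemma countable_space_homeomorphic_nat_topology:
  assumes "countable (topspace Y)"
  obtains X :: "nat topology" and h where "homeomorphic_map X Y h"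
proof -
  obtain e :: "'a \<Rightarrow> nat" where e: "inj_on e (topspace Y)"
    using assms by (auto simp: countable_def)
  have "bij_betw (inv_into (topspace Y) e) (e ` topspace Y) (topspace Y)"
    using e by (simp add: bij_betw_inv_into inj_on_imp_bij_betw)
  then show ?thesis
    using that[OF homeomorphic_map_pullback_topology] by simp
qed

lemma submetrizable_if_continuous_injective:
  assumes h: "continuous_map X Y h" "inj_on h (topspace X)" and Y: "metrizable_space Y"
  shows "submetrizable X"
proof -
  define Z where "Z = subtopology Y (h ` topspace X)"
  define \<sigma> where "\<sigma> = pullback_topology (topspace X) h Z"
  have hX: "h ` topspace X \<subseteq> topspace Y"
    using h(1) by (rule continuous_map_image_subset_topspace)
  then have topZ: "topspace Z = h ` topspace X"
    unfolding Z_def topspace_subtopology by blast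
  have "bij_betw h (topspace X) (topspace Z)"
    unfolding topZ using h(2) by (rule inj_on_imp_bij_betw)
  then have "homeomorphic_map \<sigma> Z h"
    unfolding \<sigma>_def by (rule homeomorphic_map_pullback_topology)
  then have "\<sigma> homeomorphic_space Z" by (rule homeomorphic_map_imp_homeomorphic_space)
  moreover have "metrizable_space Z"
    unfolding Z_def using Y by (rule metrizable_space_subtopology)
  ultimately have "metrizable_space \<sigma>" using homeomorphic_metrizable_space by blast
  moreover have "topspace \<sigma> = topspace X"
    unfolding \<sigma>_def topspace_pullback_topology topZ by blast
  moreover have "openin X U" if U: "openin \<sigma> U" for U
  proof -
    obtain W where W: "openin Z W" "U = h -` W \<inter> topspace X"
      using U by (auto simp: \<sigma>_def openin_pullback_topology)
    then obtain V where V: "openin Y V" "W = V \<inter> h ` topspace X"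
      by (auto simp: Z_def openin_subtopology)
    have "U = {x \<in> topspace X. h x \<in> V}" using W(2) V(2) by auto
    then show ?thesis using openin_continuous_map_preimage[OF h(1) V(1)] by simp
  qed
  ultimately show ?thesis unfolding submetrizable_def by blast
qed

lemma ConvSeq_continuous_map_image:
  assumes h: "continuous_map X Y h" "inj_on h (topspace X)" and q: "q \<in> ConvSeq X x"
  shows "h \<circ> q \<in> ConvSeq Y (h x)"
proof -
  have qX: "\<And>n. q n \<in> topspace X" and lim: "limitin X q x sequentially"
    and nonconst: "\<not> (\<exists>c. \<forall>\<^sub>F n in sequentially. q n = c)"
    using q by (simp_all add: ConvSeq_def)
  have "\<not> (\<exists>c. \<forall>\<^sub>F n in sequentially. (h \<circ> q) n = c)"
  proof
    assume "\<exists>c. \<forall>\<^sub>F n in sequentially. (h \<circ> q) n = c"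
    then obtain N c where hq: "\<And>n. n \<ge> N \<Longrightarrow> h (q n) = c"
      by (auto simp: eventually_sequentially)
    have "q n = q N" if "n \<ge> N" for n
      using inj_onD[OF h(2) _ qX qX] hq[OF that] hq[of N] by simp
    then have "\<forall>\<^sub>F n in sequentially. q n = q N"
      by (rule eventually_sequentiallyI)
    then show False using nonconst by blast
  qed
  moreover have "(h \<circ> q) n \<in> topspace Y" for n
    using continuous_map_image_subset_topspace[OF h(1)] qX by auto
  ultimately show ?thesis
    using continuous_map_limit[OF h(1) lim] by (simp add: ConvSeq_def)
qed

lemma sequence_covering_transfer:
  assumes g: "continuous_map X X' g" "inj_on g (topspace X)"
    and f': "\<And>x. x \<in> topspace X \<Longrightarrow> f' (g x) = f x"
    and "sequence_covering X Y f"
  shows "sequence_covering X' Y f'"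
  unfolding sequence_covering_def
proof clarify
  fix y p assume "p \<in> ConvSeq Y y"
  then obtain x q where q: "q \<in> ConvSeq X x" "covers f q p"
    using assms(4) unfolding sequence_covering_def by blast
  then have "covers f' (g \<circ> q) p"
    using f' by (simp add: covers_def ConvSeq_def)
  then show "\<exists>x q. q \<in> ConvSeq X' x \<and> covers f' q p"
    using ConvSeq_continuous_map_image[OF g q(1)] by blast
qed

lemma one_sequence_covering_transfer:
  assumes g: "continuous_map X X' g" "inj_on g (topspace X)"
    and f': "\<And>x. x \<in> topspace X \<Longrightarrow> f' (g x) = f x"
    and "one_sequence_covering X Y f"
  shows "one_sequence_covering X' Y f'"
  unfolding one_sequence_covering_def
proof
  fix y assume "y \<in> topspace Y"
  then obtain x where x: "x \<in> topspace X" "f x = y"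
    and lift: "\<And>p. p \<in> ConvSeq Y y \<Longrightarrow> \<exists>q \<in> ConvSeq X x. covers f q p"
    using assms(4) unfolding one_sequence_covering_def by blast
  have "\<exists>q \<in> ConvSeq X' (g x). covers f' q p" if p: "p \<in> ConvSeq Y y" for p
  proof -
    obtain q where q: "q \<in> ConvSeq X x" "covers f q p" using lift[OF p] by blast
    then have "covers f' (g \<circ> q) p"
      using f' by (simp add: covers_def ConvSeq_def)
    then show ?thesis using ConvSeq_continuous_map_image[OF g q(1)] by blast
  qed
  moreover have "g x \<in> topspace X'" "f' (g x) = y"
    using x g(1) f' by (auto simp: continuous_map_def)
  ultimately show "\<exists>x' \<in> topspace X'. f' x' = y \<and> (\<forall>p \<in> ConvSeq Y y. \<exists>q \<in> ConvSeq X' x'. covers f' q p)"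
    by blast
qed

lemma compact_map_transfer:
  assumes g: "continuous_map X X' g" "g ` topspace X = topspace X'"
    and f': "\<And>x. x \<in> topspace X \<Longrightarrow> f' (g x) = f x"
    and "compact_map X Y f"
  shows "compact_map X' Y f'"
  unfolding compact_map_def
proof
  fix y assume "y \<in> topspace Y"
  then have "compactin X' (g ` {x \<in> topspace X. f x = y})"
    using assms(4) image_compactin[OF _ g(1)] unfolding compact_map_def by blast
  moreover have "g ` {x \<in> topspace X. f x = y} = {x' \<in> topspace X'. f' x' = y}"
    using g(2) f' by force
  ultimately show "compactin X' {x' \<in> topspace X'. f' x' = y}" by simp
qed

section \<open>Convergence in the sequential fan\<close>

definition fan_nbhd :: "(nat \<Rightarrow> nat) \<Rightarrow> (nat \<times> nat) option set" where
  "fan_nbhd g = insert None {Some (n, k) | n k. g n \<le> k}"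

lemma None_in_fan_nbhd [simp]: "None \<in> fan_nbhd g"
  by (simp add: fan_nbhd_def)

lemma Some_in_fan_nbhd [simp]: "Some (n, k) \<in> fan_nbhd g \<longleftrightarrow> g n \<le> k"
  by (simp add: fan_nbhd_def)

lemma Sfan_base_cases:
  assumes "B \<in> Sfan_base"
  obtains p where "B = {Some p}" | g where "B = fan_nbhd g"
  using assms unfolding Sfan_base_def fan_nbhd_def by blast

lemma openin_S_omega_singleton: "openin S_omega {Some p}"
  unfolding S_omega_def by (rule topology_generated_by_Basis) (auto simp: Sfan_base_def)

lemma openin_S_omega_fan_nbhd: "openin S_omega (fan_nbhd g)"
  unfolding S_omega_def by (rule topology_generated_by_Basis) (auto simp: Sfan_base_def fan_nbhd_def)

lemma topspace_S_omega [simp]: "topspace S_omega = UNIV"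
proof -
  have "x \<in> topspace S_omega" for x
  proof (cases x)
    case None
    then show ?thesis using openin_subset[OF openin_S_omega_fan_nbhd[of "\<lambda>_. 0"]] by auto
  next
    case (Some p)
    then show ?thesis using openin_subset[OF openin_S_omega_singleton[of p]] by auto
  qed
  then show ?thesis by auto
qed

lemma openin_S_omega_None_imp_fan_nbhd:
  assumes "openin S_omega U" "None \<in> U"
  obtains g where "fan_nbhd g \<subseteq> U"
proof -
  define T where "T U \<longleftrightarrow> None \<in> U \<longrightarrow> (\<exists>g. fan_nbhd g \<subseteq> U)" for U
  have "istopology T"
    unfolding istopology_def
  proof (intro conjI allI impI)
    fix S S' assume S: "T S" "T S'"
    show "T (S \<inter> S')"
      unfolding T_def
    proof
      assume "None \<in> S \<inter> S'"
      then obtain g g' where "fan_nbhd g \<subseteq> S" "fan_nbhd g' \<subseteq> S'"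
        using S unfolding T_def by blast
      moreover have "fan_nbhd (\<lambda>n. max (g n) (g' n)) \<subseteq> fan_nbhd g \<inter> fan_nbhd g'"
        by (auto simp: fan_nbhd_def)
      ultimately show "\<exists>g. fan_nbhd g \<subseteq> S \<inter> S'" by blast
    qed
  next
    fix K assume "\<forall>S\<in>K. T S"
    then show "T (\<Union>K)" unfolding T_def by blast
  qed
  moreover have "T B" if "B \<in> Sfan_base" for B
    using that by (cases rule: Sfan_base_cases) (auto simp: T_def)
  moreover have "generate_topology_on Sfan_base U"
    using assms(1) unfolding S_omega_def by (rule openin_topology_generated_by)
  ultimately have "T U" by (rule generate_topology_on_coarsest)
  then show ?thesis using assms(2) that unfolding T_def by blast
qed

lemma limitin_S_omega_None_iff:
  "limitin S_omega p None sequentially \<longleftrightarrow> (\<forall>g. \<forall>\<^sub>F i in sequentially. p i \<in> fan_nbhd g)"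
proof (intro iffI allI)
  fix g assume "limitin S_omega p None sequentially"
  then show "\<forall>\<^sub>F i in sequentially. p i \<in> fan_nbhd g"
    using openin_S_omega_fan_nbhd None_in_fan_nbhd by (rule limitinD)
next
  assume nbhd: "\<forall>g. \<forall>\<^sub>F i in sequentially. p i \<in> fan_nbhd g"
  show "limitin S_omega p None sequentially"
    unfolding limitin_def
  proof (intro conjI allI impI)
    fix U assume "openin S_omega U \<and> None \<in> U"
    then obtain g where g: "fan_nbhd g \<subseteq> U"
      using openin_S_omega_None_imp_fan_nbhd by blast
    show "\<forall>\<^sub>F i in sequentially. p i \<in> U"
      by (rule eventually_mono[OF nbhd[rule_format, of g]]) (use g in blast)
  qed simp
qed

lemma ConvSeq_S_omega_limit_None:
  assumes p: "p \<in> ConvSeq S_omega y"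
  shows "y = None"
proof (rule ccontr)
  assume "y \<noteq> None"
  then obtain s where s: "y = Some s" by blast
  have "limitin S_omega p (Some s) sequentially" using p s by (simp add: ConvSeq_def)
  then have "\<forall>\<^sub>F i in sequentially. p i \<in> {Some s}"
    using openin_S_omega_singleton by (rule limitinD) simp
  then have "\<forall>\<^sub>F i in sequentially. p i = Some s" by simp
  then show False using p by (auto simp: ConvSeq_def)
qed

lemma column_in_ConvSeq_S_omega: "(\<lambda>k. Some (n, k)) \<in> ConvSeq S_omega None"
proof -
  have "limitin S_omega (\<lambda>k. Some (n, k)) None sequentially"
    unfolding limitin_S_omega_None_iff by (simp add: eventually_ge_at_top)
  moreover have "\<not> (\<forall>\<^sub>F k in sequentially. Some (n, k) = c)" for c
  proof
    assume "\<forall>\<^sub>F k in sequentially. Some (n, k) = c"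
    then obtain N where N: "\<And>k. k \<ge> N \<Longrightarrow> Some (n, k) = c"
      unfolding eventually_sequentially by blast
    have "Some (n, N) = Some (n, Suc N)" using N[of N] N[of "Suc N"] by simp
    then show False by simp
  qed
  ultimately show ?thesis by (simp add: ConvSeq_def)
qed

lemma limitin_S_omega_None_imp_bounded_columns:
  assumes lim: "limitin S_omega p None sequentially"
  obtains N where "\<And>i n k. p i = Some (n, k) \<Longrightarrow> n \<le> N"
proof -
  define C where "C = {n. \<exists>i k. p i = Some (n, k)}"
  have "finite C"
  proof (rule ccontr)
    assume "infinite C"
    define first where "first n = (LEAST i. \<exists>k. p i = Some (n, k))" for n
    have first: "\<exists>k. p (first n) = Some (n, k)" if n: "n \<in> C" for n
    proof -
      obtain i k where "p i = Some (n, k)" using n by (auto simp: C_def)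
      then have "\<exists>i k. p i = Some (n, k)" by blast
      then show ?thesis unfolding first_def by (rule LeastI_ex)
    qed
    \<comment> \<open>\<open>g\<close> pushes the first term of \<open>p\<close> in each column out of \<open>fan_nbhd g\<close>\<close>
    define g where "g n = Suc (snd (the (p (first n))))" for n
    have "\<forall>\<^sub>F i in sequentially. p i \<in> fan_nbhd g"
      using lim limitin_S_omega_None_iff by blast
    then obtain N where N: "\<And>i. i \<ge> N \<Longrightarrow> p i \<in> fan_nbhd g"
      unfolding eventually_sequentially by blast
    have "inj_on first C"
    proof (rule inj_onI)
      fix a b assume ab: "a \<in> C" "b \<in> C" "first a = first b"
      obtain ka kb where "p (first a) = Some (a, ka)" "p (first b) = Some (b, kb)"
        using first ab(1,2) by blast
      then have "Some (a, ka) = Some (b, kb)" using ab(3) by metis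
      then show "a = b" by simp
    qed
    then have "infinite (first ` C)"
      using \<open>infinite C\<close> by (simp add: finite_image_iff)
    then obtain n where n: "n \<in> C" "first n \<ge> N"
      unfolding infinite_nat_iff_unbounded_le by blast
    then obtain k where k: "p (first n) = Some (n, k)" using first by blast
    then have "g n = Suc k" by (simp add: g_def)
    then show False using N[OF n(2)] k by simp
  qed
  then obtain N where "\<forall>n \<in> C. n \<le> N" using finite_nat_set_iff_bounded_le by blast
  then show ?thesis using that unfolding C_def by blast
qed

section \<open>A countable zero-dimensional space over the fan\<close>

(* Leaf n k m is the copy of (n, k) hanging at Apex m; it is a point of the space only if
   n <= m <= k. *)
datatype point = Infty | Apex nat | Leaf nat nat nat | Isolated nat nat

instance point :: countable by countable_datatype

fun admissible :: "point \<Rightarrow> bool" where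
  "admissible (Leaf n k m) \<longleftrightarrow> n \<le> m \<and> m \<le> k"
| "admissible _ = True"

definition fan_open :: "point set \<Rightarrow> bool" where
  "fan_open U \<longleftrightarrow> U \<subseteq> Collect admissible \<and>
     (\<forall>m. Apex m \<in> U \<longrightarrow> (\<forall>\<^sub>F k in sequentially. \<forall>n\<le>m. Leaf n k m \<in> U)) \<and>
     (Infty \<in> U \<longrightarrow> (\<forall>\<^sub>F m in sequentially. Apex m \<in> U))"

lemma istopology_fan_open: "istopology fan_open"
  unfolding istopology_def
proof (intro conjI allI impI)
  fix S T assume S: "fan_open S" and T: "fan_open T"
  show "fan_open (S \<inter> T)"
    unfolding fan_open_def
  proof (intro conjI allI impI)
    show "S \<inter> T \<subseteq> Collect admissible" using S by (auto simp: fan_open_def)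
  next
    fix m assume "Apex m \<in> S \<inter> T"
    then have "\<forall>\<^sub>F k in sequentially. \<forall>n\<le>m. Leaf n k m \<in> S"
      "\<forall>\<^sub>F k in sequentially. \<forall>n\<le>m. Leaf n k m \<in> T"
      using S T by (simp_all add: fan_open_def)
    then show "\<forall>\<^sub>F k in sequentially. \<forall>n\<le>m. Leaf n k m \<in> S \<inter> T"
      by (rule eventually_elim2) simp
  next
    assume "Infty \<in> S \<inter> T"
    then have "\<forall>\<^sub>F m in sequentially. Apex m \<in> S" "\<forall>\<^sub>F m in sequentially. Apex m \<in> T"
      using S T by (simp_all add: fan_open_def)
    then show "\<forall>\<^sub>F m in sequentially. Apex m \<in> S \<inter> T"
      by (rule eventually_elim2) simp
  qed
next
  fix K assume K: "\<forall>S\<in>K. fan_open S"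
  show "fan_open (\<Union>K)"
    unfolding fan_open_def
  proof (intro conjI allI impI)
    show "\<Union>K \<subseteq> Collect admissible" using K by (auto simp: fan_open_def)
  next
    fix m assume "Apex m \<in> \<Union>K"
    then obtain S where "S \<in> K" "Apex m \<in> S" by blast
    then have "\<forall>\<^sub>F k in sequentially. \<forall>n\<le>m. Leaf n k m \<in> S"
      using K by (simp add: fan_open_def)
    then show "\<forall>\<^sub>F k in sequentially. \<forall>n\<le>m. Leaf n k m \<in> \<Union>K"
      by (rule eventually_mono) (use \<open>S \<in> K\<close> in blast)
  next
    assume "Infty \<in> \<Union>K"
    then obtain S where "S \<in> K" "Infty \<in> S" by blast
    then have "\<forall>\<^sub>F m in sequentially. Apex m \<in> S"
      using K by (simp add: fan_open_def)
    then show "\<forall>\<^sub>F m in sequentially. Apex m \<in> \<Union>K"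
      by (rule eventually_mono) (use \<open>S \<in> K\<close> in blast)
  qed
qed

definition fan_space :: "point topology" where
  "fan_space = topology fan_open"

lemma openin_fan_space: "openin fan_space U \<longleftrightarrow> fan_open U"
  by (simp add: fan_space_def istopology_fan_open)

lemma topspace_fan_space: "topspace fan_space = Collect admissible"
proof -
  have "fan_open (Collect admissible)"
    by (auto simp: fan_open_def elim: eventually_mono[OF eventually_ge_at_top])
  then have "Collect admissible \<subseteq> topspace fan_space"
    by (simp add: openin_subset openin_fan_space)
  moreover have "topspace fan_space \<subseteq> Collect admissible"
    using openin_topspace[of fan_space] unfolding openin_fan_space fan_open_def by blast
  ultimately show ?thesis by blast
qed

definition apex_nbhd :: "nat \<Rightarrow> nat \<Rightarrow> point set" where
  "apex_nbhd m j = insert (Apex m) {Leaf n k m | n k. n \<le> m \<and> m \<le> k \<and> j \<le> k}"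

definition infty_nbhd :: "nat \<Rightarrow> (nat \<Rightarrow> nat) \<Rightarrow> point set" where
  "infty_nbhd M J = insert Infty (\<Union>m\<in>{M..}. apex_nbhd m (J m))"

lemma fan_open_apex_nbhd: "fan_open (apex_nbhd m j)"
  unfolding fan_open_def apex_nbhd_def
  using eventually_ge_at_top[of "max m j"] by (auto elim: eventually_mono)

lemma fan_open_Diff_apex_nbhd: "fan_open (Collect admissible - apex_nbhd m j)"
  unfolding fan_open_def apex_nbhd_def
  using eventually_gt_at_top[of m] by (auto elim: eventually_mono)

lemma fan_open_infty_nbhd: "fan_open (infty_nbhd M J)"
  unfolding fan_open_def
proof (intro conjI allI impI)
  fix m assume "Apex m \<in> infty_nbhd M J"
  then have sub: "apex_nbhd m (J m) \<subseteq> infty_nbhd M J"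
    by (auto simp: infty_nbhd_def apex_nbhd_def)
  have "Apex m \<in> apex_nbhd m (J m)" by (simp add: apex_nbhd_def)
  then have "\<forall>\<^sub>F k in sequentially. \<forall>n\<le>m. Leaf n k m \<in> apex_nbhd m (J m)"
    using fan_open_apex_nbhd[of m "J m"] by (simp add: fan_open_def)
  then show "\<forall>\<^sub>F k in sequentially. \<forall>n\<le>m. Leaf n k m \<in> infty_nbhd M J"
    by (rule eventually_mono) (use sub in blast)
next
  show "\<forall>\<^sub>F m in sequentially. Apex m \<in> infty_nbhd M J"
    using eventually_ge_at_top[of M] by (rule eventually_mono) (auto simp: infty_nbhd_def apex_nbhd_def)
qed (auto simp: infty_nbhd_def apex_nbhd_def)

lemma fan_open_Diff_infty_nbhd: "fan_open (Collect admissible - infty_nbhd M J)"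
  unfolding fan_open_def infty_nbhd_def apex_nbhd_def by auto

fun fan_embedding :: "point \<Rightarrow> real \<times> real" where
  "fan_embedding Infty = (0, 0)"
| "fan_embedding (Apex m) = (1 / (real m + 1), 0)"
| "fan_embedding (Leaf n k m) = (1 / (real m + 1), 1 / (real (prod_encode (n, k)) + 1))"
| "fan_embedding (Isolated n k) = (-1, 1 / (real (prod_encode (n, k)) + 1))"

lemma inj_fan_embedding: "inj fan_embedding"
proof (rule injI)
  fix x y assume "fan_embedding x = fan_embedding y"
  then show "x = y"
    by (cases x; cases y) (auto simp: divide_simps)
qed

lemma eventually_inverse_Suc_less:
  assumes "(0::real) < r"
  shows "\<forall>\<^sub>F k in sequentially. 1 / (real k + 1) < r"
  using order_tendstoD(2)[OF LIMSEQ_inverse_real_of_nat assms]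
  by (simp add: inverse_eq_divide add.commute)

lemma continuous_map_fan_embedding: "continuous_map fan_space euclidean fan_embedding"
  unfolding continuous_map_def topspace_fan_space openin_fan_space
proof (intro conjI allI impI)
  fix V :: "(real \<times> real) set" assume "openin euclidean V"
  then have V: "open V" by simp
  define W where "W = {x \<in> Collect admissible. fan_embedding x \<in> V}"
  have "fan_open W"
    unfolding fan_open_def
  proof (intro conjI allI impI)
    fix m assume "Apex m \<in> W"
    then have "fan_embedding (Apex m) \<in> V" by (simp add: W_def)
    then obtain r where r: "r > 0" "ball (fan_embedding (Apex m)) r \<subseteq> V"
      using V open_contains_ball by blast
    have leaf: "Leaf n k m \<in> W"
      if "n \<le> m" "m \<le> k" "1 / (real k + 1) < r" for n k
    proof -
      have "1 / (real (prod_encode (n, k)) + 1) \<le> 1 / (real k + 1)"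
        using le_prod_encode_2[of k n] by (simp add: frac_le)
      then have "dist (fan_embedding (Apex m)) (fan_embedding (Leaf n k m)) < r"
        using that(3) by (simp add: dist_Pair_Pair dist_real_def)
      then show ?thesis using r(2) that(1,2) by (auto simp: W_def)
    qed
    show "\<forall>\<^sub>F k in sequentially. \<forall>n\<le>m. Leaf n k m \<in> W"
      using eventually_conj[OF eventually_ge_at_top[of m] eventually_inverse_Suc_less[OF r(1)]]
      by (rule eventually_mono) (blast intro: leaf)
  next
    assume "Infty \<in> W"
    then have "fan_embedding Infty \<in> V" by (simp add: W_def)
    then obtain r where r: "r > 0" "ball (fan_embedding Infty) r \<subseteq> V"
      using V open_contains_ball by blast
    have apex: "Apex m \<in> W"
      if "1 / (real m + 1) < r" for m
      using that r(2) by (auto simp: W_def dist_Pair_Pair dist_real_def)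
    show "\<forall>\<^sub>F m in sequentially. Apex m \<in> W"
      using eventually_inverse_Suc_less[OF r(1)] by (rule eventually_mono) (rule apex)
  qed (auto simp: W_def)
  then show "fan_open {x \<in> Collect admissible. fan_embedding x \<in> V}"
    by (simp add: W_def)
qed auto

lemma Hausdorff_space_fan_space: "Hausdorff_space fan_space"
  using Hausdorff_space_injective_preimage[OF Hausdorff_space_euclidean continuous_map_fan_embedding]
    inj_fan_embedding by (simp add: inj_on_subset)

lemma clopen_in_fan_space:
  assumes "fan_open U" "fan_open (Collect admissible - U)"
  shows "closedin fan_space U \<and> openin fan_space U"
  using assms by (auto simp: closedin_def topspace_fan_space openin_fan_space fan_open_def)

lemma t1_space_fan_space: "t1_space fan_space"
  by (rule Hausdorff_imp_t1_space[OF Hausdorff_space_fan_space])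

lemma isolated_point_clopen_in_fan_space:
  assumes "admissible x" "x \<noteq> Infty" "\<And>m. x \<noteq> Apex m"
  shows "closedin fan_space {x} \<and> openin fan_space {x}"
proof
  show "closedin fan_space {x}"
    using t1_space_fan_space assms(1) by (simp add: t1_space_closedin_singleton topspace_fan_space)
  show "openin fan_space {x}"
    using assms by (auto simp: openin_fan_space fan_open_def)
qed

lemma fan_open_imp_infty_nbhd_subset:
  assumes W: "fan_open W" "Infty \<in> W"
  obtains M J where "infty_nbhd M J \<subseteq> W"
proof -
  obtain M where M: "\<And>m. m \<ge> M \<Longrightarrow> Apex m \<in> W"
    using W by (auto simp: fan_open_def eventually_sequentially)
  have "\<forall>m. \<exists>j. M \<le> m \<longrightarrow> (\<forall>k\<ge>j. \<forall>n\<le>m. Leaf n k m \<in> W)"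
    using W M by (auto simp: fan_open_def eventually_sequentially)
  then obtain J where J: "\<And>m k n. M \<le> m \<Longrightarrow> J m \<le> k \<Longrightarrow> n \<le> m \<Longrightarrow> Leaf n k m \<in> W"
    by metis
  have "infty_nbhd M J \<subseteq> W"
    using W(2) M J by (auto simp: infty_nbhd_def apex_nbhd_def)
  then show ?thesis by (rule that)
qed

lemma fan_open_imp_apex_nbhd_subset:
  assumes W: "fan_open W" "Apex m \<in> W"
  obtains j where "apex_nbhd m j \<subseteq> W"
proof -
  have "\<forall>\<^sub>F k in sequentially. \<forall>n\<le>m. Leaf n k m \<in> W"
    using W by (simp add: fan_open_def)
  then obtain j where j: "\<And>k n. j \<le> k \<Longrightarrow> n \<le> m \<Longrightarrow> Leaf n k m \<in> W"
    unfolding eventually_sequentially by blast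
  have "apex_nbhd m j \<subseteq> W"
    using W(2) j by (auto simp: apex_nbhd_def)
  then show ?thesis by (rule that)
qed

lemma fan_space_dim_le_0: "fan_space dim_le 0"
  unfolding dimension_le_0_neighbourhood_base_of_clopen
proof (subst open_neighbourhood_base_of, blast, intro allI impI)
  fix W x assume "openin fan_space W \<and> x \<in> W"
  then have W: "fan_open W" and x: "x \<in> W" by (simp_all add: openin_fan_space)
  show "\<exists>U. (closedin fan_space U \<and> openin fan_space U) \<and> x \<in> U \<and> U \<subseteq> W"
  proof (cases x)
    case Infty
    then obtain M J where "infty_nbhd M J \<subseteq> W"
      using W x fan_open_imp_infty_nbhd_subset by blast
    moreover have "x \<in> infty_nbhd M J" using Infty by (simp add: infty_nbhd_def)
    ultimately show ?thesis
      using clopen_in_fan_space[OF fan_open_infty_nbhd fan_open_Diff_infty_nbhd] by blast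
  next
    case (Apex m)
    then obtain j where "apex_nbhd m j \<subseteq> W"
      using W x fan_open_imp_apex_nbhd_subset by blast
    moreover have "x \<in> apex_nbhd m j" using Apex by (simp add: apex_nbhd_def)
    ultimately show ?thesis
      using clopen_in_fan_space[OF fan_open_apex_nbhd fan_open_Diff_apex_nbhd] by blast
  next
    case (Leaf n k m)
    then have "closedin fan_space {x} \<and> openin fan_space {x}"
      using W x by (intro isolated_point_clopen_in_fan_space) (auto simp: fan_open_def)
    then show ?thesis using x by blast
  next
    case (Isolated n k)
    then have "closedin fan_space {x} \<and> openin fan_space {x}"
      by (intro isolated_point_clopen_in_fan_space) auto
    then show ?thesis using x by blast
  qed
qed

lemma regular_space_fan_space: "regular_space fan_space"
  using fan_space_dim_le_0 by (rule zero_dimensional_imp_regular_space)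

fun fan_proj :: "point \<Rightarrow> (nat \<times> nat) option" where
  "fan_proj Infty = None"
| "fan_proj (Apex m) = None"
| "fan_proj (Leaf n k m) = Some (n, k)"
| "fan_proj (Isolated n k) = Some (n, k)"

lemma continuous_map_fan_proj: "continuous_map fan_space S_omega fan_proj"
  unfolding continuous_map_def topspace_fan_space openin_fan_space
proof (intro conjI allI impI)
  fix U assume U: "openin S_omega U"
  define W where "W = {x \<in> Collect admissible. fan_proj x \<in> U}"
  have "fan_open W"
    unfolding fan_open_def
  proof (intro conjI allI impI)
    fix m assume "Apex m \<in> W"
    then have "None \<in> U" by (simp add: W_def)
    then obtain g where g: "fan_nbhd g \<subseteq> U"
      using U openin_S_omega_None_imp_fan_nbhd by blast
    have "\<forall>n\<in>{..m}. \<forall>\<^sub>F k in sequentially. max m (g n) \<le> k"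
      using eventually_ge_at_top by blast
    then have "\<forall>\<^sub>F k in sequentially. \<forall>n\<in>{..m}. max m (g n) \<le> k"
      by (simp add: eventually_ball_finite)
    then show "\<forall>\<^sub>F k in sequentially. \<forall>n\<le>m. Leaf n k m \<in> W"
      by (rule eventually_mono) (use g in \<open>auto simp: W_def\<close>)
  next
    assume "Infty \<in> W"
    then show "\<forall>\<^sub>F m in sequentially. Apex m \<in> W" by (simp add: W_def)
  qed (auto simp: W_def)
  then show "fan_open {x \<in> Collect admissible. fan_proj x \<in> U}"
    by (simp add: W_def)
qed auto

lemma fan_proj_image: "fan_proj ` topspace fan_space = topspace S_omega"
proof -
  have "y \<in> fan_proj ` Collect admissible" for y
  proof (cases y)
    case None
    then show ?thesis by (auto intro: image_eqI[of _ _ Infty])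
  next
    case (Some p)
    then show ?thesis by (cases p) (auto intro: image_eqI[of _ _ "Isolated (fst p) (snd p)"])
  qed
  then show ?thesis by (auto simp: topspace_fan_space)
qed

lemma limitin_Apex_Infty: "limitin fan_space Apex Infty sequentially"
  unfolding limitin_def topspace_fan_space openin_fan_space fan_open_def by auto

lemma compact_map_fan_proj: "compact_map fan_space S_omega fan_proj"
  unfolding compact_map_def
proof
  fix y :: "(nat \<times> nat) option"
  show "compactin fan_space {x \<in> topspace fan_space. fan_proj x = y}"
  proof (cases y)
    case None
    have "{x \<in> topspace fan_space. fan_proj x = y} = insert Infty (range Apex)"
    proof (intro equalityI subsetI)
      fix x assume "x \<in> {x \<in> topspace fan_space. fan_proj x = y}"
      then show "x \<in> insert Infty (range Apex)" using None by (cases x) auto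
    qed (auto simp: None topspace_fan_space)
    moreover have "compactin fan_space (insert Infty (range Apex))"
      using limitin_Apex_Infty by (rule compactin_sequence_with_limit) (auto simp: topspace_fan_space)
    ultimately show ?thesis by simp
  next
    case (Some p)
    obtain n k where p: "p = (n, k)" by fastforce
    have "{x \<in> topspace fan_space. fan_proj x = y} \<subseteq> insert (Isolated n k) (Leaf n k ` {..k})"
    proof
      fix x assume "x \<in> {x \<in> topspace fan_space. fan_proj x = y}"
      then show "x \<in> insert (Isolated n k) (Leaf n k ` {..k})"
        using Some p by (cases x) (auto simp: topspace_fan_space)
    qed
    then have "finite {x \<in> topspace fan_space. fan_proj x = y}"
      by (rule finite_subset) simp
    then show ?thesis by (intro finite_imp_compactin) auto
  qed
qed

fun fan_lift :: "nat \<Rightarrow> (nat \<times> nat) option \<Rightarrow> point" where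
  "fan_lift N None = Apex N"
| "fan_lift N (Some (n, k)) = (if N \<le> k then Leaf n k N else Isolated n k)"

lemma fan_proj_fan_lift [simp]: "fan_proj (fan_lift N y) = y"
  by (induction N y rule: fan_lift.induct) auto

lemma admissible_fan_lift:
  assumes "\<And>n k. y = Some (n, k) \<Longrightarrow> n \<le> N"
  shows "admissible (fan_lift N y)"
  using assms by (induction N y rule: fan_lift.induct) auto

lemma limitin_fan_lift:
  assumes lim: "limitin S_omega p None sequentially"
    and cols: "\<And>i n k. p i = Some (n, k) \<Longrightarrow> n \<le> N"
  shows "limitin fan_space (\<lambda>i. fan_lift N (p i)) (Apex N) sequentially"
  unfolding limitin_def topspace_fan_space openin_fan_space
proof (intro conjI allI impI)
  fix U assume U: "fan_open U \<and> Apex N \<in> U"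
  then have "\<forall>\<^sub>F k in sequentially. \<forall>n\<le>N. Leaf n k N \<in> U"
    by (simp add: fan_open_def)
  then obtain j where j: "\<And>k n. j \<le> k \<Longrightarrow> n \<le> N \<Longrightarrow> Leaf n k N \<in> U"
    unfolding eventually_sequentially by blast
  have "fan_lift N (p i) \<in> U" if "p i \<in> fan_nbhd (\<lambda>_. max N j)" for i
  proof (cases "p i")
    case None
    then show ?thesis using U by simp
  next
    case (Some nk)
    then obtain n k where nk: "p i = Some (n, k)" by (cases nk) blast
    then show ?thesis using that j[of k n] cols[OF nk] by simp
  qed
  moreover have "\<forall>\<^sub>F i in sequentially. p i \<in> fan_nbhd (\<lambda>_. max N j)"
    using lim limitin_S_omega_None_iff by blast
  ultimately show "\<forall>\<^sub>F i in sequentially. fan_lift N (p i) \<in> U"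
    by (auto elim: eventually_mono)
qed simp

lemma sequence_covering_fan_proj: "sequence_covering fan_space S_omega fan_proj"
  unfolding sequence_covering_def
proof (intro allI impI)
  fix y p assume p: "p \<in> ConvSeq S_omega y"
  then have lim: "limitin S_omega p None sequentially"
    using ConvSeq_S_omega_limit_None by (auto simp: ConvSeq_def)
  obtain N where cols: "\<And>i n k. p i = Some (n, k) \<Longrightarrow> n \<le> N"
    using limitin_S_omega_None_imp_bounded_columns[OF lim] by blast
  define q where "q i = fan_lift N (p i)" for i
  have "\<not> (\<exists>c. \<forall>\<^sub>F i in sequentially. q i = c)"
  proof
    assume "\<exists>c. \<forall>\<^sub>F i in sequentially. q i = c"
    then obtain c where "\<forall>\<^sub>F i in sequentially. q i = c" by blast
    then have "\<forall>\<^sub>F i in sequentially. p i = fan_proj c"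
      by (rule eventually_mono) (auto simp: q_def)
    then show False using p by (auto simp: ConvSeq_def)
  qed
  moreover have "q i \<in> topspace fan_space" for i
    using cols by (auto simp: q_def topspace_fan_space intro: admissible_fan_lift)
  moreover have "limitin fan_space q (Apex N) sequentially"
    unfolding q_def using lim cols by (rule limitin_fan_lift)
  ultimately have "q \<in> ConvSeq fan_space (Apex N)"
    by (simp add: ConvSeq_def)
  moreover have "covers fan_proj q p" by (simp add: covers_def q_def)
  ultimately show "\<exists>x q. q \<in> ConvSeq fan_space x \<and> covers fan_proj q p" by blast
qed

lemma no_lift_at_Apex:
  assumes q: "q \<in> ConvSeq fan_space (Apex m)"
  shows "\<not> covers fan_proj q (\<lambda>k. Some (Suc m, k))"
proof
  assume "covers fan_proj q (\<lambda>k. Some (Suc m, k))"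
  then have proj: "\<And>i. fan_proj (q i) = Some (Suc m, i)" by (simp add: covers_def)
  have "limitin fan_space q (Apex m) sequentially" using q by (simp add: ConvSeq_def)
  moreover have "openin fan_space (apex_nbhd m 0)" by (simp add: openin_fan_space fan_open_apex_nbhd)
  ultimately have "\<forall>\<^sub>F i in sequentially. q i \<in> apex_nbhd m 0"
    by (rule limitinD) (simp add: apex_nbhd_def)
  then obtain i where "q i \<in> apex_nbhd m 0"
    using eventually_happens'[OF sequentially_bot] by blast
  then show False using proj[of i] by (auto simp: apex_nbhd_def)
qed

lemma fan_open_Diff_range_column_lift:
  assumes proj: "\<And>i. fan_proj (q i) = Some (0, i)"
    and levels: "\<And>m. finite {i. q i = Leaf 0 i m}"
  shows "fan_open (Collect admissible - range q)"
  unfolding fan_open_def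
proof (intro conjI allI impI)
  fix m
  have ev: "\<forall>\<^sub>F k in sequentially. q k \<noteq> Leaf 0 k m"
    using levels[of m] by (simp add: cofinite_eq_sequentially[symmetric] eventually_cofinite)
  show "\<forall>\<^sub>F k in sequentially. \<forall>n\<le>m. Leaf n k m \<in> Collect admissible - range q"
    using eventually_conj[OF ev eventually_ge_at_top[of m]]
  proof (rule eventually_mono)
    fix k assume "q k \<noteq> Leaf 0 k m \<and> m \<le> k"
    then show "\<forall>n\<le>m. Leaf n k m \<in> Collect admissible - range q"
      using proj by auto (metis fan_proj.simps(3) option.inject prod.inject)
  qed
next
  have "Apex m \<notin> range q" for m
    using proj by (metis fan_proj.simps(2) imageE option.distinct(1))
  then show "\<forall>\<^sub>F m in sequentially. Apex m \<in> Collect admissible - range q" by simp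
qed auto

lemma no_lift_at_Infty:
  assumes q: "q \<in> ConvSeq fan_space Infty"
  shows "\<not> covers fan_proj q (\<lambda>k. Some (0, k))"
proof
  assume "covers fan_proj q (\<lambda>k. Some (0, k))"
  then have proj: "\<And>i. fan_proj (q i) = Some (0, i)" by (simp add: covers_def)
  have lim: "\<forall>\<^sub>F i in sequentially. q i \<in> U" if "fan_open U" "Infty \<in> U" for U
    using q that by (auto simp: ConvSeq_def openin_fan_space intro: limitinD)
  show False
  proof (cases "\<exists>m. infinite {i. q i = Leaf 0 i m}")
    case True
    then obtain m where m: "infinite {i. q i = Leaf 0 i m}" by blast
    have "\<forall>\<^sub>F i in sequentially. q i \<in> infty_nbhd (Suc m) (\<lambda>_. 0)"
      using fan_open_infty_nbhd by (rule lim) (simp add: infty_nbhd_def)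
    then obtain N where N: "\<And>i. i \<ge> N \<Longrightarrow> q i \<in> infty_nbhd (Suc m) (\<lambda>_. 0)"
      unfolding eventually_sequentially by blast
    obtain i where i: "i \<ge> N" "q i = Leaf 0 i m"
      using m unfolding infinite_nat_iff_unbounded_le by blast
    then have "Leaf 0 i m \<in> infty_nbhd (Suc m) (\<lambda>_. 0)"
      using N[OF i(1)] by simp
    then show False by (auto simp: infty_nbhd_def apex_nbhd_def)
  next
    case False
    have "Infty \<notin> range q"
      using proj by (metis fan_proj.simps(1) imageE option.distinct(1))
    then have "\<forall>\<^sub>F i in sequentially. q i \<in> Collect admissible - range q"
      using False proj by (intro lim fan_open_Diff_range_column_lift) auto
    then obtain i where "q i \<in> Collect admissible - range q"
      using eventually_happens'[OF sequentially_bot] by blast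
    then show False by simp
  qed
qed

lemma not_one_sequence_covering_fan_proj: "\<not> one_sequence_covering fan_space S_omega fan_proj"
proof
  assume "one_sequence_covering fan_space S_omega fan_proj"
  then obtain x where x: "x \<in> topspace fan_space" "fan_proj x = None"
    and lift: "\<And>p. p \<in> ConvSeq S_omega None \<Longrightarrow> \<exists>q \<in> ConvSeq fan_space x. covers fan_proj q p"
    unfolding one_sequence_covering_def by fastforce
  show False
  proof (cases x)
    case Infty
    then show False using lift[OF column_in_ConvSeq_S_omega] no_lift_at_Infty by blast
  next
    case (Apex m)
    then show False using lift[OF column_in_ConvSeq_S_omega] no_lift_at_Apex by blast
  qed (use x in auto)
qed

theorem mainTheorem2:
  shows "\<exists>(X :: nat topology) (f :: nat \<Rightarrow> (nat \<times> nat) option).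
     countable (topspace X) \<and> submetrizable X \<and> t1_space X \<and> regular_space X \<and>
     continuous_map X S_omega f \<and> f ` topspace X = topspace S_omega \<and>
     compact_map X S_omega f \<and> sequence_covering X S_omega f \<and>
     \<not> one_sequence_covering X S_omega f"
proof -
  obtain X :: "nat topology" and h where hom: "homeomorphic_map X fan_space h"
    using countable_space_homeomorphic_nat_topology[OF countableI_type] by blast
  then obtain g where "homeomorphic_maps X fan_space h g"
    by (auto simp: homeomorphic_map_maps)
  then have h: "continuous_map X fan_space h" "inj_on h (topspace X)" "h ` topspace X = topspace fan_space"
    and g: "continuous_map fan_space X g" "inj_on g (topspace fan_space)" "g ` topspace fan_space = topspace X"
    and hg: "\<And>x. x \<in> topspace fan_space \<Longrightarrow> h (g x) = x"
    by (auto simp: homeomorphic_maps_map homeomorphic_eq_everything_map)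
  have "countable (topspace X)" by (rule countableI_type)
  moreover have "submetrizable X"
    using continuous_map_compose[OF h(1) continuous_map_fan_embedding]
      comp_inj_on[OF h(2) inj_on_subset[OF inj_fan_embedding subset_UNIV]]
    by (rule submetrizable_if_continuous_injective) (rule metrizable_space_euclidean)
  moreover have "t1_space X" "regular_space X"
    using homeomorphic_map_imp_homeomorphic_space[OF hom] t1_space_fan_space regular_space_fan_space
    by (simp_all add: homeomorphic_t1_space homeomorphic_regular_space)
  moreover have "continuous_map X S_omega (fan_proj \<circ> h)"
    using h(1) continuous_map_fan_proj by (rule continuous_map_compose)
  moreover have "(fan_proj \<circ> h) ` topspace X = topspace S_omega"
    using h(3) fan_proj_image by (metis image_comp)
  moreover have "compact_map X S_omega (fan_proj \<circ> h)"
    using g(1,3) _ compact_map_fan_proj by (rule compact_map_transfer) (simp add: hg)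
  moreover have "sequence_covering X S_omega (fan_proj \<circ> h)"
    using g(1,2) _ sequence_covering_fan_proj by (rule sequence_covering_transfer) (simp add: hg)
  moreover have "\<not> one_sequence_covering X S_omega (fan_proj \<circ> h)"
    using one_sequence_covering_transfer[OF h(1,2), of fan_proj "fan_proj \<circ> h"]
      not_one_sequence_covering_fan_proj by auto
  ultimately show ?thesis by blast
qed

end
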